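(* Let $0<\Delta\le\pi$ and let $f$ be a probability density on $\mathbb R$ whose characteristic function $\Phi(\omega)=\int f(t)e^{i\omega t}dt$ has support in $(-\Delta,\Delta)$ (with $f$ taken as the continuous function $f(t)=\frac1{2\pi}\int\Phi(\omega)e^{-i\omega t}d\omega$). Then the restriction of $f$ to the integers is a well-defined probability distribution on $\mathbb Z$, namely $\mathrm{prob}(k)=f(k)$ for $k\in\mathbb Z$, and its characteristic function $\Phi_{\mathbb Z}(\omega)=\sum_{k\in\mathbb Z}f(k)e^{i\omega k}$ satisfies $\Phi_{\mathbb Z}(\omega)=0$ for $|\omega|\in(\Delta,\pi]$. *)

theory Defs
  imports "HOL-Analysis.Analysis"
begin

definition char_fun :: "(real \<Rightarrow> real) \<Rightarrow> real \<Rightarrow> complex" where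
  "char_fun f \<omega> = integral\<^sup>L lborel (\<lambda>t. complex_of_real (f t) * cis (\<omega> * t))"

definition char_fun_int :: "(int \<Rightarrow> real) \<Rightarrow> real \<Rightarrow> complex" where
  "char_fun_int p \<omega> = infsum (\<lambda>k. complex_of_real (p k) * cis (\<omega> * of_int k)) UNIV"

definition prob_density :: "(real \<Rightarrow> real) \<Rightarrow> bool" where
  "prob_density f \<longleftrightarrow> f \<in> borel_measurable lborel \<and> (\<forall>t. 0 \<le> f t) \<and>
     integrable lborel f \<and> integral\<^sup>L lborel f = 1"

end

theory Submission
  imports Defs "HOL-Probability.Probability"
begin

text \<open>
  By Fourier inversion \<open>f t = (1 / 2\<pi>) \<integral> \<Phi> \<omega> e\<^sup>-\<^sup>i\<^sup>\<omega>\<^sup>t d\<omega>\<close>, and since \<open>\<Phi>\<close> vanishes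
  outside \<open>[-\<pi>, \<pi>]\<close>, the values \<open>f k\<close> at the integers are the Fourier coefficients of \<open>\<Phi>\<close>
  on \<open>[-\<pi>, \<pi>]\<close>. The Cesaro means of the symmetric partial sums of \<open>\<Sum>\<^sub>k f k e\<^sup>i\<^sup>\<omega>\<^sup>k\<close>
  are therefore averages of \<open>\<Phi>\<close> against the nonnegative Fejer kernel centred at \<open>\<omega>\<close>:
  they tend to \<open>\<Phi> 0 = 1\<close> at \<open>\<omega> = 0\<close>, and to \<open>0\<close> when \<open>\<Delta> < \<bar>\<omega>\<bar> \<le> \<pi>\<close>, because then \<open>\<Phi>\<close>
  vanishes near \<open>\<omega>\<close> modulo \<open>2\<pi>\<close>. At \<open>\<omega> = 0\<close> the terms \<open>f k \<ge> 0\<close> make the partial sums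
  increase, so Cesaro convergence upgrades to \<open>\<Sum>\<^sub>k f k = 1\<close>. The series is then absolutely
  summable for every \<open>\<omega>\<close>, and its sum equals its Cesaro limit.
\<close>

section \<open>Dirichlet and Fejer kernels\<close>

definition dirichlet_kernel :: "nat \<Rightarrow> real \<Rightarrow> real" where
  "dirichlet_kernel n u = 1 + 2 * (\<Sum>k=1..n. cos (real k * u))"

text \<open>This is \<open>N + 1\<close> times the usual, normalised Fejer kernel.\<close>

definition fejer_kernel :: "nat \<Rightarrow> real \<Rightarrow> real" where
  "fejer_kernel N u = (\<Sum>n\<le>N. dirichlet_kernel n u)"

lemma fejer_kernel_minus [simp]: "fejer_kernel N (- u) = fejer_kernel N u"
  by (simp add: fejer_kernel_def dirichlet_kernel_def)

lemma dirichlet_kernel_Suc: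
  "dirichlet_kernel (Suc n) u = dirichlet_kernel n u + 2 * cos (real (Suc n) * u)"
  by (simp add: dirichlet_kernel_def algebra_simps)

lemma dirichlet_kernel_eq_sum_cis:
  "(\<Sum>k\<in>{- int n..int n}. cis (u * of_int k)) = complex_of_real (dirichlet_kernel n u)"
proof (induction n)
  case 0
  show ?case by (simp add: dirichlet_kernel_def)
next
  case (Suc n)
  have cis_pair: "cis a + cis (- a) = complex_of_real (2 * cos a)" for a
    by (simp add: complex_eq_iff)
  have "{- int (Suc n)..int (Suc n)} = insert (int n + 1) (insert (- (int n + 1)) {- int n..int n})"
    by auto
  then have "(\<Sum>k\<in>{- int (Suc n)..int (Suc n)}. cis (u * of_int k))
      = cis (u * (real n + 1)) + cis (- (u * (real n + 1))) + (\<Sum>k\<in>{- int n..int n}. cis (u * of_int k))"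
    by (simp add: algebra_simps)
  also have "\<dots> = complex_of_real (dirichlet_kernel (Suc n) u)"
    unfolding cis_pair Suc.IH by (simp add: dirichlet_kernel_Suc algebra_simps)
  finally show ?case .
qed

lemma one_minus_cos_mult_dirichlet_kernel:
  "(1 - cos u) * dirichlet_kernel n u = cos (real n * u) - cos (real (Suc n) * u)"
proof (induction n)
  case 0
  show ?case by (simp add: dirichlet_kernel_def)
next
  case (Suc n)
  define v where "v = real (Suc n) * u"
  have "cos (real n * u) = cos v * cos u + sin v * sin u"
    using cos_diff[of v u] by (simp add: v_def algebra_simps)
  moreover have "cos (real (Suc (Suc n)) * u) = cos v * cos u - sin v * sin u"
    using cos_add[of v u] by (simp add: v_def algebra_simps)
  moreover have "(1 - cos u) * dirichlet_kernel (Suc n) u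
      = (1 - cos u) * dirichlet_kernel n u + (1 - cos u) * 2 * cos v"
    by (simp add: dirichlet_kernel_Suc v_def algebra_simps)
  ultimately show ?case
    unfolding Suc.IH by (simp add: v_def algebra_simps)
qed

lemma one_minus_cos_mult_fejer_kernel:
  "(1 - cos u) * fejer_kernel N u = 1 - cos (real (Suc N) * u)"
proof (induction N)
  case 0
  show ?case by (simp add: fejer_kernel_def dirichlet_kernel_def)
next
  case (Suc N)
  then show ?case
    by (simp add: fejer_kernel_def distrib_left one_minus_cos_mult_dirichlet_kernel)
qed

lemma fejer_kernel_eq:
  assumes "cos u \<noteq> 1"
  shows "fejer_kernel N u = (1 - cos (real (Suc N) * u)) / (1 - cos u)"
  using one_minus_cos_mult_fejer_kernel[of u N] assms by (simp add: field_simps)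

lemma fejer_kernel_nonneg: "0 \<le> fejer_kernel N u"
proof (cases "cos u = 1")
  case True
  then obtain m :: int where "u = m * 2 * pi"
    by (auto simp: cos_one_2pi_int)
  then have "cos (real k * u) = 1" for k
    using cos_int_2pin[of "int k * m"] by (simp add: algebra_simps)
  then show ?thesis
    by (simp add: fejer_kernel_def dirichlet_kernel_def sum_nonneg)
next
  case False
  then show ?thesis
    using cos_le_one[of u] by (simp add: fejer_kernel_eq)
qed

lemma cos_le_cos_of_bounds:
  assumes "0 \<le> d" "d \<le> \<bar>u\<bar>" "\<bar>u\<bar> \<le> 2 * pi - d"
  shows "cos u \<le> cos d"
proof -
  have "cos \<bar>u\<bar> \<le> cos d"
  proof (cases "\<bar>u\<bar> \<le> pi")
    case True
    then show ?thesis
      using assms by (intro cos_monotone_0_pi_le) auto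
  next
    case False
    have "cos \<bar>u\<bar> = cos (2 * pi - \<bar>u\<bar>)"
      by (simp add: cos_diff)
    also have "\<dots> \<le> cos d"
      using assms False by (intro cos_monotone_0_pi_le) auto
    finally show ?thesis .
  qed
  then show ?thesis
    by (cases "u \<ge> 0") auto
qed

lemma cos_lt_one: "0 < d \<Longrightarrow> d \<le> pi \<Longrightarrow> cos d < 1"
  using cos_monotone_0_pi[of 0 d] by simp

lemma fejer_kernel_le:
  assumes "0 < d" "d \<le> \<bar>u\<bar>" "\<bar>u\<bar> \<le> 2 * pi - d"
  shows "fejer_kernel N u \<le> 2 / (1 - cos d)"
proof -
  have "cos d < 1"
    using assms by (intro cos_lt_one) auto
  moreover have "cos u \<le> cos d"
    using assms by (intro cos_le_cos_of_bounds) auto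
  ultimately have "fejer_kernel N u \<le> 2 / (1 - cos u)"
    using cos_ge_minus_one[of "real (Suc N) * u"]
    by (simp add: fejer_kernel_eq divide_right_mono)
  also have "\<dots> \<le> 2 / (1 - cos d)"
    using \<open>cos d < 1\<close> \<open>cos u \<le> cos d\<close> by (intro divide_left_mono) auto
  finally show ?thesis .
qed

lemma has_integral_cos_nat_mult:
  assumes "k \<ge> 1"
  shows "((\<lambda>u. cos (real k * u)) has_integral 0) {-pi..pi}"
proof -
  have "((\<lambda>u. cos (real k * u)) has_integral
          sin (real k * pi) / real k - sin (real k * - pi) / real k) {-pi..pi}"
    using assms
    by (intro fundamental_theorem_of_calculus)
       (auto intro!: derivative_eq_intros simp: has_real_derivative_iff_has_vector_derivative[symmetric])
  then show ?thesis
    by simp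
qed

lemma has_integral_fejer_kernel:
  "(fejer_kernel N has_integral 2 * pi * real (Suc N)) {-pi..pi}"
proof -
  have "(dirichlet_kernel n has_integral 2 * pi) {-pi..pi}" for n
  proof -
    have "((\<lambda>u. 1 + 2 * (\<Sum>k=1..n. cos (real k * u))) has_integral 2 * pi + 2 * (\<Sum>k=1..n. 0)) {-pi..pi}"
      using has_integral_const_real[of "1::real" "-pi" pi]
      by (intro has_integral_add has_integral_mult_right has_integral_sum has_integral_cos_nat_mult) auto
    then show ?thesis
      by (simp add: dirichlet_kernel_def[abs_def])
  qed
  then have "((\<lambda>u. \<Sum>n\<le>N. dirichlet_kernel n u) has_integral (\<Sum>n\<le>N. 2 * pi)) {-pi..pi}"
    by (intro has_integral_sum) auto
  then show ?thesis
    by (simp add: fejer_kernel_def[abs_def] mult.commute)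
qed

lemma continuous_on_fejer_kernel [continuous_intros]:
  fixes h :: "'a::topological_space \<Rightarrow> real"
  assumes "continuous_on S h"
  shows "continuous_on S (\<lambda>x. fejer_kernel N (h x))"
proof -
  have "continuous_on UNIV (fejer_kernel N)"
    unfolding fejer_kernel_def[abs_def] dirichlet_kernel_def by (intro continuous_intros)
  then show ?thesis
    using continuous_on_compose2[OF _ assms] by blast
qed

section \<open>Cesaro means and symmetric sums over the integers\<close>

definition cesaro_mean :: "(nat \<Rightarrow> 'a::real_vector) \<Rightarrow> nat \<Rightarrow> 'a" where
  "cesaro_mean X N = (\<Sum>n\<le>N. X n) /\<^sub>R real (Suc N)"

lemma LIMSEQ_of_eps_plus_div_bound:
  fixes X :: "nat \<Rightarrow> 'a::real_normed_vector"
  assumes "\<And>e. e > 0 \<Longrightarrow> \<exists>C. \<forall>N. norm (X N - L) \<le> e + C / real (Suc N)"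
  shows "X \<longlonglongrightarrow> L"
proof (rule LIMSEQ_I)
  fix r :: real
  assume "0 < r"
  then obtain C where C: "\<And>N. norm (X N - L) \<le> r / 2 + C / real (Suc N)"
    using assms[of "r / 2"] by auto
  obtain M where M: "\<bar>C\<bar> / (r / 2) < real M"
    using reals_Archimedean2 by blast
  have "norm (X N - L) < r" if "M \<le> N" for N
  proof -
    have "\<bar>C\<bar> < r / 2 * real M"
      using M \<open>0 < r\<close> by (simp add: field_simps)
    also have "\<dots> \<le> r / 2 * real (Suc N)"
      using that \<open>0 < r\<close> by (intro mult_left_mono) auto
    finally have "C / real (Suc N) < r / 2"
      by (simp add: field_simps)
    then show ?thesis
      using C[of N] by linarith
  qed
  then show "\<exists>M. \<forall>N\<ge>M. norm (X N - L) < r"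
    by blast
qed

lemma cesaro_mean_tendsto:
  fixes X :: "nat \<Rightarrow> 'a::real_normed_vector"
  assumes "X \<longlonglongrightarrow> L"
  shows "cesaro_mean X \<longlonglongrightarrow> L"
proof (rule LIMSEQ_of_eps_plus_div_bound)
  fix e :: real
  assume "e > 0"
  then obtain M where M: "\<And>n. M \<le> n \<Longrightarrow> norm (X n - L) \<le> e"
    using LIMSEQ_D[OF assms] by (metis less_le)
  define C where "C = (\<Sum>n<M. norm (X n - L))"
  have "norm (cesaro_mean X N - L) \<le> e + C / real (Suc N)" for N
  proof -
    have "cesaro_mean X N - L = (\<Sum>n\<le>N. X n - L) /\<^sub>R real (Suc N)"
      by (simp add: cesaro_mean_def sum_subtractf sum_constant_scaleR scaleR_diff_right)
    then have "norm (cesaro_mean X N - L) = norm (\<Sum>n\<le>N. X n - L) / real (Suc N)"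
      by (simp add: divide_inverse_commute)
    also have "\<dots> \<le> (\<Sum>n\<le>N. norm (X n - L)) / real (Suc N)"
      by (intro divide_right_mono norm_sum) auto
    also have "(\<Sum>n\<le>N. norm (X n - L)) \<le> (\<Sum>n\<le>N. e + (if n < M then norm (X n - L) else 0))"
      using M \<open>e > 0\<close> by (intro sum_mono) (auto simp: not_less)
    also have "\<dots> \<le> real (Suc N) * e + C"
      unfolding sum.distrib sum.If_cases[OF finite_atMost] C_def
      using \<open>e > 0\<close> by (auto intro!: sum_mono2)
    finally show ?thesis
      by (simp add: divide_right_mono add_divide_distrib)
  qed
  then show "\<exists>C. \<forall>N. norm (cesaro_mean X N - L) \<le> e + C / real (Suc N)"
    by blast
qed

lemma mono_tendsto_of_cesaro_mean_tendsto:
  fixes P :: "nat \<Rightarrow> real"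
  assumes "mono P" and lim: "cesaro_mean P \<longlonglongrightarrow> L"
  shows "P \<longlonglongrightarrow> L"
proof (rule tendsto_sandwich[OF _ _ lim tendsto_const])
  have "cesaro_mean P N \<le> P N" for N
  proof -
    have "(\<Sum>n\<le>N. P n) \<le> (\<Sum>n\<le>N. P N)"
      using \<open>mono P\<close> by (intro sum_mono) (auto simp: mono_def)
    then show ?thesis
      by (simp add: cesaro_mean_def field_simps)
  qed
  then show "\<forall>\<^sub>F N in sequentially. cesaro_mean P N \<le> P N"
    by simp
  txt \<open>Monotonicity bounds the mean from below by \<open>(M P\<^sub>0 + (N + 1 - M) P\<^sub>M) / (N + 1)\<close>,
    which tends to \<open>P\<^sub>M\<close>.\<close>
  have "P M \<le> L" for M
  proof (rule LIMSEQ_le[OF _ lim])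
    have "P M + real M * (P 0 - P M) / real (Suc N) \<le> cesaro_mean P N" if "M \<le> N" for N
    proof -
      have "(\<Sum>n\<le>N. if n < M then P 0 else P M) \<le> (\<Sum>n\<le>N. P n)"
        using \<open>mono P\<close> by (intro sum_mono) (auto simp: mono_def)
      moreover have "{..N} \<inter> {n. n < M} = {..<M}" and "{..N} \<inter> - {n. n < M} = {M..N}"
        using that by auto
      ultimately have "real M * P 0 + (real (Suc N) - real M) * P M \<le> (\<Sum>n\<le>N. P n)"
        using that by (simp add: sum.If_cases of_nat_diff)
      then have "(real M * P 0 + (real (Suc N) - real M) * P M) / real (Suc N) \<le> cesaro_mean P N"
        by (simp add: cesaro_mean_def divide_right_mono divide_inverse_commute)
      then show ?thesis
        by (simp add: field_simps)
    qed
    then show "\<exists>N0. \<forall>N\<ge>N0. P M + real M * (P 0 - P M) / real (Suc N) \<le> cesaro_mean P N"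
      by blast
    have "(\<lambda>N. P M + real M * (P 0 - P M) * inverse (real (Suc N))) \<longlonglongrightarrow> P M + real M * (P 0 - P M) * 0"
      by (intro tendsto_intros LIMSEQ_inverse_real_of_nat)
    then show "(\<lambda>N. P M + real M * (P 0 - P M) / real (Suc N)) \<longlonglongrightarrow> P M"
      by (simp add: divide_inverse)
  qed
  then show "\<forall>\<^sub>F N in sequentially. P N \<le> L"
    by simp
qed

definition sym_partial_sum :: "(int \<Rightarrow> 'a::comm_monoid_add) \<Rightarrow> nat \<Rightarrow> 'a" where
  "sym_partial_sum a n = (\<Sum>k\<in>{- int n..int n}. a k)"

lemma filterlim_sym_intervals_finite_subsets:
  "filterlim (\<lambda>n. {- int n..int n}) (finite_subsets_at_top UNIV) sequentially"
  unfolding filterlim_finite_subsets_at_top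
proof (intro allI impI)
  fix F :: "int set"
  assume "finite F \<and> F \<subseteq> UNIV"
  then obtain M where "\<And>k. k \<in> F \<Longrightarrow> \<bar>k\<bar> \<le> M"
    using bdd_above_finite[of "abs ` F"] by (auto simp: bdd_above_def)
  then have "F \<subseteq> {- int n..int n}" if "nat M \<le> n" for n
    using that by fastforce
  then show "\<forall>\<^sub>F n in sequentially. finite {- int n..int n} \<and> F \<subseteq> {- int n..int n} \<and> {- int n..int n} \<subseteq> UNIV"
    unfolding eventually_sequentially by auto
qed

lemma has_sum_imp_sym_partial_sum_tendsto:
  assumes "(a has_sum s) UNIV"
  shows "sym_partial_sum a \<longlonglongrightarrow> s"
  using filterlim_compose[OF assms[unfolded has_sum_def] filterlim_sym_intervals_finite_subsets]
  by (simp add: sym_partial_sum_def[abs_def] o_def)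

lemma infsum_eq_cesaro_limit:
  fixes a :: "int \<Rightarrow> 'a::banach"
  assumes "a summable_on UNIV" and "cesaro_mean (sym_partial_sum a) \<longlonglongrightarrow> L"
  shows "infsum a UNIV = L"
  using cesaro_mean_tendsto[OF has_sum_imp_sym_partial_sum_tendsto[OF has_sum_infsum[OF assms(1)]]]
    assms(2) by (rule LIMSEQ_unique)

lemma nonneg_has_sum_of_cesaro_mean_tendsto:
  fixes a :: "int \<Rightarrow> real"
  assumes nonneg: "\<And>k. 0 \<le> a k" and lim: "cesaro_mean (sym_partial_sum a) \<longlonglongrightarrow> L"
  shows "(a has_sum L) UNIV"
proof -
  have mono: "mono (sym_partial_sum a)"
    unfolding mono_def sym_partial_sum_def using nonneg by (auto intro!: sum_mono2)
  have bound: "sym_partial_sum a n \<le> L" for n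
    using mono mono_tendsto_of_cesaro_mean_tendsto[OF mono lim] by (rule incseq_le)
  have "a summable_on UNIV"
  proof (rule nonneg_bdd_above_summable_on)
    show "bdd_above (sum a ` {F. F \<subseteq> UNIV \<and> finite F})"
    proof (rule bdd_aboveI2)
      fix F :: "int set"
      assume "F \<in> {F. F \<subseteq> UNIV \<and> finite F}"
      then have "eventually (\<lambda>n. F \<subseteq> {- int n..int n}) sequentially"
        using filterlim_sym_intervals_finite_subsets
        by (auto simp: filterlim_finite_subsets_at_top elim: eventually_mono)
      then obtain n where "F \<subseteq> {- int n..int n}"
        by (meson eventually_sequentially order.refl)
      then have "sum a F \<le> sym_partial_sum a n"
        unfolding sym_partial_sum_def using nonneg by (intro sum_mono2) auto
      then show "sum a F \<le> L"
        using bound[of n] by linarith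
    qed
  qed (use nonneg in auto)
  then show ?thesis
    using infsum_eq_cesaro_limit[OF _ lim] by (metis has_sum_infsum)
qed

section \<open>Fejer means of Fourier series\<close>

definition fourier_coeff :: "(real \<Rightarrow> complex) \<Rightarrow> int \<Rightarrow> complex" where
  "fourier_coeff g k = integral {-pi..pi} (\<lambda>w. g w * cis (- (w * of_int k))) / (2 * pi)"

lemma sym_partial_sum_fourier_series:
  assumes "continuous_on {-pi..pi} g"
  shows "sym_partial_sum (\<lambda>k. fourier_coeff g k * cis (x * of_int k)) n
       = integral {-pi..pi} (\<lambda>w. g w * dirichlet_kernel n (x - w)) / (2 * pi)"
proof -
  have int: "(\<lambda>w. g w * cis ((x - w) * of_int k)) integrable_on {-pi..pi}" for k :: int
    by (intro integrable_continuous_interval continuous_intros assms)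
  have coeff_times_cis: "fourier_coeff g k * cis (x * of_int k)
      = integral {-pi..pi} (\<lambda>w. g w * cis ((x - w) * of_int k)) / (2 * pi)" for k
  proof -
    have "fourier_coeff g k * cis (x * of_int k)
        = integral {-pi..pi} (\<lambda>w. g w * cis (- (w * of_int k)) * cis (x * of_int k)) / (2 * pi)"
      by (simp add: fourier_coeff_def)
    also have "(\<lambda>w. g w * cis (- (w * of_int k)) * cis (x * of_int k)) = (\<lambda>w. g w * cis ((x - w) * of_int k))"
      by (simp add: mult.assoc cis_mult algebra_simps)
    finally show ?thesis .
  qed
  then have "sym_partial_sum (\<lambda>k. fourier_coeff g k * cis (x * of_int k)) n
      = integral {-pi..pi} (\<lambda>w. \<Sum>k\<in>{- int n..int n}. g w * cis ((x - w) * of_int k)) / (2 * pi)"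
    by (simp add: sym_partial_sum_def coeff_times_cis integral_sum[OF _ int] sum_divide_distrib)
  also have "\<dots> = integral {-pi..pi} (\<lambda>w. g w * dirichlet_kernel n (x - w)) / (2 * pi)"
    by (simp add: dirichlet_kernel_eq_sum_cis flip: sum_distrib_left)
  finally show ?thesis .
qed

lemma cesaro_mean_fourier_series:
  assumes "continuous_on {-pi..pi} g"
  shows "cesaro_mean (sym_partial_sum (\<lambda>k. fourier_coeff g k * cis (x * of_int k))) N
       = integral {-pi..pi} (\<lambda>w. g w * fejer_kernel N (x - w)) / (2 * pi * real (Suc N))"
proof -
  have int: "(\<lambda>w. g w * dirichlet_kernel n (x - w)) integrable_on {-pi..pi}" for n
    unfolding dirichlet_kernel_def by (intro integrable_continuous_interval continuous_intros assms)
  have partial_sums_eq: "(\<Sum>n\<le>N. sym_partial_sum (\<lambda>k. fourier_coeff g k * cis (x * of_int k)) n)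
      = integral {-pi..pi} (\<lambda>w. g w * fejer_kernel N (x - w)) / (2 * pi)"
    by (simp add: sym_partial_sum_fourier_series[OF assms] integral_sum[OF _ int]
        fejer_kernel_def sum_distrib_left flip: sum_divide_distrib)
  show ?thesis
    unfolding cesaro_mean_def partial_sums_eq by (simp add: scaleR_conv_of_real field_simps)
qed

lemma cesaro_mean_fourier_series_at_0_minus:
  assumes cont: "continuous_on {-pi..pi} g"
  shows "cesaro_mean (sym_partial_sum (fourier_coeff g)) N - g 0
       = integral {-pi..pi} (\<lambda>w. (g w - g 0) * fejer_kernel N w) / (2 * pi * real (Suc N))"
proof -
  define S where "S = 2 * pi * real (Suc N)"
  have "S \<noteq> 0"
    by (simp add: S_def)
  have int: "(\<lambda>w. g w * fejer_kernel N w) integrable_on {-pi..pi}"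
    by (intro integrable_continuous_interval continuous_intros cont)
  have kernel: "((\<lambda>w. g 0 * fejer_kernel N w) has_integral g 0 * S) {-pi..pi}"
    unfolding S_def by (intro has_integral_mult_right has_integral_of_real has_integral_fejer_kernel)
  have mean: "cesaro_mean (sym_partial_sum (fourier_coeff g)) N
      = integral {-pi..pi} (\<lambda>w. g w * fejer_kernel N w) / S"
    using cesaro_mean_fourier_series[OF cont, of 0 N] by (simp add: S_def)
  have diff: "integral {-pi..pi} (\<lambda>w. (g w - g 0) * fejer_kernel N w)
      = integral {-pi..pi} (\<lambda>w. g w * fejer_kernel N w) - g 0 * S"
    using integral_diff[OF int has_integral_integrable[OF kernel]] integral_unique[OF kernel]
    by (simp add: left_diff_distrib)
  show ?thesis
    unfolding S_def[symmetric] mean diff using \<open>S \<noteq> 0\<close>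
    by (simp only: diff_divide_distrib nonzero_mult_div_cancel_right of_real_eq_0_iff not_False_eq_True)
qed

lemma norm_mult_fejer_kernel_le:
  fixes y :: complex
  assumes "0 < d" "d \<le> pi" "\<bar>w\<bar> \<le> pi" "0 \<le> e"
    and near: "\<bar>w\<bar> < d \<Longrightarrow> norm y \<le> e" and far: "norm y \<le> A"
  shows "norm (y * fejer_kernel N w) \<le> e * fejer_kernel N w + A * (2 / (1 - cos d))"
proof (cases "\<bar>w\<bar> < d")
  case True
  then have "norm y * fejer_kernel N w \<le> e * fejer_kernel N w"
    using near fejer_kernel_nonneg by (intro mult_right_mono) auto
  moreover have "0 \<le> A * (2 / (1 - cos d))"
    using order_trans[OF norm_ge_zero far] cos_lt_one[OF assms(1,2)] by (intro mult_nonneg_nonneg) auto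
  ultimately show ?thesis
    by (simp add: norm_mult abs_of_nonneg[OF fejer_kernel_nonneg])
next
  case False
  then have "norm y * fejer_kernel N w \<le> A * (2 / (1 - cos d))"
    using assms fejer_kernel_nonneg order_trans[OF norm_ge_zero far] by (intro mult_mono fejer_kernel_le) auto
  moreover have "0 \<le> e * fejer_kernel N w"
    using \<open>0 \<le> e\<close> fejer_kernel_nonneg by simp
  ultimately show ?thesis
    by (simp add: norm_mult abs_of_nonneg[OF fejer_kernel_nonneg])
qed

lemma cesaro_mean_fourier_series_at_0:
  assumes cont: "continuous_on {-pi..pi} g"
  shows "cesaro_mean (sym_partial_sum (fourier_coeff g)) \<longlonglongrightarrow> g 0"
proof (rule LIMSEQ_of_eps_plus_div_bound)
  fix e :: real
  assume "e > 0"
  obtain B where B: "\<And>w. w \<in> {-pi..pi} \<Longrightarrow> norm (g w) \<le> B"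
    using continuous_on_compact_bound[OF compact_Icc cont] by blast
  obtain \<eta> where "\<eta> > 0" and \<eta>: "\<And>w. w \<in> {-pi..pi} \<Longrightarrow> \<bar>w\<bar> < \<eta> \<Longrightarrow> norm (g w - g 0) < e"
    using cont \<open>e > 0\<close> unfolding continuous_on_iff by (force simp: dist_norm)
  define d where "d = min \<eta> pi"
  have "0 < d" "d \<le> pi"
    using \<open>\<eta> > 0\<close> by (auto simp: d_def)
  define C where "C = 2 * B * (2 / (1 - cos d))"
  have pointwise: "norm ((g w - g 0) * fejer_kernel N w) \<le> e * fejer_kernel N w + C"
    if w: "w \<in> {-pi..pi}" for w N
    unfolding C_def using \<open>0 < d\<close> \<open>d \<le> pi\<close> w \<open>e > 0\<close>
      \<eta>[OF w] norm_triangle_ineq4[of "g w" "g 0"] B[OF w] B[of 0]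
    by (intro norm_mult_fejer_kernel_le) (auto simp: d_def)
  have "norm (cesaro_mean (sym_partial_sum (fourier_coeff g)) N - g 0) \<le> e + C / real (Suc N)" for N
  proof -
    define S where "S = 2 * pi * real (Suc N)"
    have "S > 0"
      by (simp add: S_def)
    have bound: "((\<lambda>w. e * fejer_kernel N w + C) has_integral e * S + 2 * pi * C) {-pi..pi}"
      unfolding S_def using has_integral_const_real[of C "-pi" pi]
      by (intro has_integral_add has_integral_mult_right has_integral_fejer_kernel) auto
    have "(\<lambda>w. (g w - g 0) * fejer_kernel N w) integrable_on {-pi..pi}"
      by (intro integrable_continuous_interval continuous_intros cont)
    from integral_norm_bound_integral[OF this has_integral_integrable[OF bound] pointwise]
    have "norm (integral {-pi..pi} (\<lambda>w. (g w - g 0) * fejer_kernel N w)) \<le> e * S + 2 * pi * C"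
      using integral_unique[OF bound] by simp
    then have "norm (cesaro_mean (sym_partial_sum (fourier_coeff g)) N - g 0) \<le> (e * S + 2 * pi * C) / S"
      unfolding cesaro_mean_fourier_series_at_0_minus[OF cont] S_def[symmetric]
      using \<open>S > 0\<close> by (simp only: norm_divide norm_of_real abs_of_pos divide_right_mono less_imp_le)
    also have "\<dots> = e * S / S + 2 * pi * C / S"
      by (rule add_divide_distrib)
    also have "2 * pi * C / S = C / real (Suc N)"
      unfolding S_def by (rule mult_divide_mult_cancel_left) simp
    also have "e * S / S = e"
      using \<open>S > 0\<close> by simp
    finally show ?thesis .
  qed
  then show "\<exists>C. \<forall>N. norm (cesaro_mean (sym_partial_sum (fourier_coeff g)) N - g 0) \<le> e + C / real (Suc N)"
    by blast
qed

lemma norm_cesaro_mean_fourier_series_le: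
  fixes g :: "real \<Rightarrow> complex"
  assumes cont: "continuous_on {-pi..pi} g" and "0 \<le> C"
    and pointwise: "\<And>w. w \<in> {-pi..pi} \<Longrightarrow> norm (g w * fejer_kernel N (x - w)) \<le> C"
  shows "norm (cesaro_mean (sym_partial_sum (\<lambda>k. fourier_coeff g k * cis (x * of_int k))) N)
      \<le> C / real (Suc N)"
proof -
  have int: "(\<lambda>w. g w * fejer_kernel N (x - w)) integrable_on {-pi..pi}"
    by (intro integrable_continuous_interval continuous_intros cont)
  have "w \<in> {-pi..pi} - {} \<Longrightarrow> norm (g w * fejer_kernel N (x - w)) \<le> C" for w
    using pointwise by simp
  from has_integral_bound_real[OF \<open>0 \<le> C\<close> finite.emptyI integrable_integral[OF int] this]
  have integral_bound: "norm (integral {-pi..pi} (\<lambda>w. g w * fejer_kernel N (x - w))) \<le> 2 * pi * C"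
    by (simp add: algebra_simps)
  have "norm (cesaro_mean (sym_partial_sum (\<lambda>k. fourier_coeff g k * cis (x * of_int k))) N)
      = norm (integral {-pi..pi} (\<lambda>w. g w * fejer_kernel N (x - w))) / (2 * pi * real (Suc N))"
    using abs_of_pos[of "2 * pi * real (Suc N)"]
    by (simp only: cesaro_mean_fourier_series[OF cont] norm_divide norm_of_real pi_gt_zero
        of_nat_0_less_iff zero_less_Suc zero_less_mult_iff mult_pos_pos zero_less_numeral simp_thms)
  also have "\<dots> \<le> 2 * pi * C / (2 * pi * real (Suc N))"
    using integral_bound by (intro divide_right_mono) simp_all
  also have "\<dots> = C / real (Suc N)"
    by (rule mult_divide_mult_cancel_left) simp
  finally show ?thesis .
qed

text \<open>The support condition says that the distance from \<open>x\<close> to the support of \<open>g\<close>, taken modulo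
  \<open>2\<pi>\<close>, is at least \<open>\<delta>\<close>; there the Fejer kernel is bounded uniformly in \<open>N\<close>.\<close>

lemma cesaro_mean_fourier_series_tendsto_0:
  assumes cont: "continuous_on {-pi..pi} g" and "0 < \<delta>" "\<delta> \<le> pi"
    and support: "\<And>w. w \<in> {-pi..pi} \<Longrightarrow> g w \<noteq> 0 \<Longrightarrow> \<delta> \<le> \<bar>x - w\<bar> \<and> \<bar>x - w\<bar> \<le> 2 * pi - \<delta>"
  shows "cesaro_mean (sym_partial_sum (\<lambda>k. fourier_coeff g k * cis (x * of_int k))) \<longlonglongrightarrow> 0"
proof -
  obtain B where "0 \<le> B" and B: "\<And>w. w \<in> {-pi..pi} \<Longrightarrow> norm (g w) \<le> B"
    using continuous_on_compact_bound[OF compact_Icc cont] by blast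
  define C where "C = B * (2 / (1 - cos \<delta>))"
  have "0 \<le> C"
    using \<open>0 \<le> B\<close> cos_lt_one[OF \<open>0 < \<delta>\<close> \<open>\<delta> \<le> pi\<close>] by (simp add: C_def)
  have pointwise: "norm (g w * fejer_kernel N (x - w)) \<le> C" if w: "w \<in> {-pi..pi}" for w N
  proof (cases "g w = 0")
    case False
    then have "fejer_kernel N (x - w) \<le> 2 / (1 - cos \<delta>)"
      using support[OF w] \<open>0 < \<delta>\<close> by (intro fejer_kernel_le) auto
    then have "norm (g w) * fejer_kernel N (x - w) \<le> C"
      unfolding C_def using B[OF w] fejer_kernel_nonneg \<open>0 \<le> B\<close> by (intro mult_mono) auto
    then show ?thesis
      using fejer_kernel_nonneg[of N "x - w"] by (simp add: norm_mult)
  qed (use \<open>0 \<le> C\<close> in simp)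
  have bound: "norm (cesaro_mean (sym_partial_sum (\<lambda>k. fourier_coeff g k * cis (x * of_int k))) N)
      \<le> C / real (Suc N)" for N
    using cont \<open>0 \<le> C\<close> pointwise by (rule norm_cesaro_mean_fourier_series_le)
  show ?thesis
  proof (rule Lim_null_comparison)
    show "\<forall>\<^sub>F N in sequentially.
        norm (cesaro_mean (sym_partial_sum (\<lambda>k. fourier_coeff g k * cis (x * of_int k))) N) \<le> C / real (Suc N)"
      by (intro always_eventually allI bound)
    show "(\<lambda>N. C / real (Suc N)) \<longlonglongrightarrow> 0"
      using tendsto_mult_right_zero[OF LIMSEQ_inverse_real_of_nat, of C] by (simp add: divide_inverse)
  qed
qed

section \<open>Fourier inversion for band-limited densities\<close>

lemma real_distribution_density:
  assumes "prob_density f"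
  shows "real_distribution (density lborel (\<lambda>t. ennreal (f t)))"
proof -
  have f: "f \<in> borel_measurable lborel" "\<And>t. 0 \<le> f t" "integrable lborel f" "integral\<^sup>L lborel f = 1"
    using assms by (auto simp: prob_density_def)
  have "(\<integral>\<^sup>+ t. ennreal (f t) \<partial>lborel) = ennreal (integral\<^sup>L lborel f)"
    using f by (intro nn_integral_eq_integral) auto
  then have "prob_space (density lborel (\<lambda>t. ennreal (f t)))"
    using f by (intro prob_spaceI) (simp add: emeasure_density)
  then show ?thesis
    by (simp add: real_distribution_def real_distribution_axioms_def)
qed

lemma char_density:
  assumes "prob_density f"
  shows "char (density lborel (\<lambda>t. ennreal (f t))) = char_fun f"
proof
  fix w
  have "f \<in> borel_measurable lborel" "\<And>t. 0 \<le> f t"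
    using assms by (auto simp: prob_density_def)
  then show "char (density lborel (\<lambda>t. ennreal (f t))) w = char_fun f w"
    unfolding char_def char_fun_def
    by (subst integral_density) (auto simp: scaleR_conv_of_real cis_conv_exp)
qed

lemma continuous_on_char_fun:
  assumes "prob_density f"
  shows "continuous_on UNIV (char_fun f)"
  using real_distribution.isCont_char[OF real_distribution_density[OF assms]]
  by (simp add: char_density[OF assms] continuous_at_imp_continuous_on)

lemma char_fun_zero:
  assumes "prob_density f"
  shows "char_fun f 0 = 1"
  using real_distribution.char_zero[OF real_distribution_density[OF assms]]
  by (simp add: char_density[OF assms])

lemma measure_density_singleton:
  assumes "f \<in> borel_measurable lborel"
  shows "measure (density lborel (\<lambda>t. ennreal (f t))) {a} = 0"
proof -
  have "emeasure (density lborel (\<lambda>t. ennreal (f t))) {a} = (\<integral>\<^sup>+ t. ennreal (f t) * indicator {a} t \<partial>lborel)"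
    using assms by (simp add: emeasure_density)
  also have "\<dots> = 0"
    by (rule nn_integral_null_set[of "{a}", THEN trans]) auto
  finally show ?thesis
    by (simp add: measure_def)
qed

lemma measure_density_Ioc:
  fixes f :: "real \<Rightarrow> real"
  assumes "f \<in> borel_measurable lborel" "\<And>t. 0 \<le> f t" "continuous_on {a..b} f"
  shows "measure (density lborel (\<lambda>t. ennreal (f t))) {a<..b} = integral {a..b} f"
proof -
  have int: "(f has_integral integral {a..b} f) {a..b}"
    using integrable_continuous_interval[OF assms(3)] by (rule integrable_integral)
  then have int_Ioc: "(f has_integral integral {a..b} f) {a<..b}"
    by (rule has_integral_spike_set_eq[THEN iffD1, rotated 2]) (auto intro: negligible_subset[of "{a}"])
  have "emeasure (density lborel (\<lambda>t. ennreal (f t))) {a<..b}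
      = (\<integral>\<^sup>+ t. ennreal (f t) * indicator {a<..b} t \<partial>lborel)"
    using assms(1) by (simp add: emeasure_density)
  also have "\<dots> = (\<integral>\<^sup>+ t. ennreal (indicator {a<..b} t * f t) \<partial>lborel)"
    by (intro nn_integral_cong) (simp add: indicator_def)
  also have "\<dots> = ennreal (integral {a..b} f)"
    using nn_integral_has_integral_lebesgue[OF _ int_Ioc] assms(2) by blast
  finally show ?thesis
    using has_integral_nonneg[OF int assms(2)] by (simp add: measure_def)
qed

lemma integral_cis_linear:
  assumes "a \<le> b" "t \<noteq> 0"
  shows "integral {a..b} (\<lambda>s. cis (- (t * s))) = (iexp (- (t * a)) - iexp (- (t * b))) / (\<i> * t)"
proof -
  have "((\<lambda>s. \<i> * cis (- (t * s)) / t) has_vector_derivative cis (- (t * x))) (at x within {a..b})" for x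
  proof -
    have "((\<lambda>s. exp (\<i> * complex_of_real (- (t * s)))) has_vector_derivative
        (- t) *\<^sub>R (\<i> * exp (\<i> * complex_of_real (- (t * x))))) (at x within {a..b})"
      by (rule vector_diff_chain_within[where g = "\<lambda>y. exp (\<i> * complex_of_real y)", unfolded o_def])
         (auto intro!: derivative_eq_intros has_vector_derivative_iexp)
    then show ?thesis
      using assms by (auto intro!: derivative_eq_intros simp: field_simps scaleR_conv_of_real cis_conv_exp)
  qed
  then have "((\<lambda>s. cis (- (t * s))) has_integral \<i> * cis (- (t * b)) / t - \<i> * cis (- (t * a)) / t) {a..b}"
    using assms by (intro fundamental_theorem_of_calculus) auto
  then show ?thesis
    using assms by (simp add: integral_unique cis_conv_exp field_simps)
qed

lemma Levy_inversion_density: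
  assumes pd: "prob_density f" and "a \<le> b"
  shows "(\<lambda>n::nat. 1 / (2 * pi) * (LBINT t=ereal (- real n)..ereal (real n).
            (iexp (- (t * a)) - iexp (- (t * b))) / (\<i> * t) * char_fun f t))
         \<longlonglongrightarrow> measure (density lborel (\<lambda>t. ennreal (f t))) {a<..b}"
proof -
  have "measure (density lborel (\<lambda>t. ennreal (f t))) {a} = 0"
    and "measure (density lborel (\<lambda>t. ennreal (f t))) {b} = 0"
    using pd by (simp_all add: measure_density_singleton prob_density_def)
  from real_distribution.Levy_Inversion[OF real_distribution_density[OF pd] \<open>a \<le> b\<close> this]
  show ?thesis
    by (simp add: char_density[OF pd])
qed

lemma interval_integral_eq_integral_of_vanishing:
  fixes H :: "real \<Rightarrow> 'a::euclidean_space"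
  assumes "continuous_on UNIV H" and vanish: "\<And>w. R < \<bar>w\<bar> \<Longrightarrow> H w = 0" and "R \<le> T" "0 \<le> T"
  shows "(LBINT t=ereal (- T)..ereal T. H t) = integral {-R..R} H"
proof -
  have "(LBINT t=ereal (- T)..ereal T. H t) = integral {- T..T} H"
    using \<open>0 \<le> T\<close>
    by (intro interval_integral_eq_integral borel_integrable_atLeastAtMost' continuous_on_subset[OF assms(1)])
       auto
  also have "\<dots> = integral {- T..T} (\<lambda>w. if w \<in> {-R..R} then H w else 0)"
    by (rule integral_cong) (auto simp: vanish)
  also have "\<dots> = integral ({-R..R} \<inter> {- T..T}) H"
    by (rule integral_restrict_Int)
  also have "{-R..R} \<inter> {- T..T} = {-R..R}"
    using \<open>R \<le> T\<close> by auto
  finally show ?thesis .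
qed

text \<open>For a band-limited characteristic function the truncated integrals in Levy's inversion
  formula are eventually constant.\<close>

lemma band_limited_measure_Ioc:
  assumes pd: "prob_density f" and vanish: "\<And>w. R \<le> \<bar>w\<bar> \<Longrightarrow> char_fun f w = 0" and "a \<le> b"
  shows "integral {-R..R} (\<lambda>w. char_fun f w * integral {a..b} (\<lambda>s. cis (- (w * s)))) / (2 * pi)
       = measure (density lborel (\<lambda>t. ennreal (f t))) {a<..b}"
proof -
  define H where "H = (\<lambda>w. char_fun f w * integral {a..b} (\<lambda>s. cis (- (w * s))))"
  define L where "L = (\<lambda>t. (iexp (- (t * a)) - iexp (- (t * b))) / (\<i> * t) * char_fun f t)"
  have char_cont: "continuous_on UNIV (char_fun f)"
    by (rule continuous_on_char_fun[OF pd])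
  have "continuous_on UNIV (\<lambda>w. integral (cbox a b) (\<lambda>s. cis (- (w * s))))"
    by (rule integral_continuous_on_param) (auto simp: case_prod_unfold intro!: continuous_intros)
  then have H_cont: "continuous_on UNIV H"
    unfolding H_def using char_cont by (intro continuous_intros) auto
  have "L t = H t" if "t \<noteq> 0" for t
    using integral_cis_linear[OF \<open>a \<le> b\<close> that] by (simp add: L_def H_def mult.commute)
  then have L_eq_H: "AE t in lborel. L t = H t"
    using AE_lborel_singleton[of 0] by (auto elim!: eventually_mono)
  have [measurable]: "char_fun f \<in> borel_measurable borel"
    by (rule borel_measurable_continuous_onI[OF char_cont])
  have "(LBINT t=ereal (- real n)..ereal (real n). L t) = integral {-R..R} H" if "R \<le> real n" for n :: nat
  proof -
    have "(LBINT t=ereal (- real n)..ereal (real n). L t) = (LBINT t=ereal (- real n)..ereal (real n). H t)"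
      using L_eq_H borel_measurable_continuous_onI[OF H_cont]
      by (intro interval_integral_cong_AE) (auto simp: L_def elim!: eventually_mono)
    also have "\<dots> = integral {-R..R} H"
      using H_cont that by (intro interval_integral_eq_integral_of_vanishing) (auto simp: H_def vanish)
    finally show ?thesis .
  qed
  moreover have "\<forall>\<^sub>F n in sequentially. R \<le> real n"
    using filterlim_real_sequentially by (simp add: filterlim_at_top)
  ultimately have "\<forall>\<^sub>F n in sequentially. 1 / (2 * pi) * (LBINT t=ereal (- real n)..ereal (real n). L t)
      = 1 / (2 * pi) * integral {-R..R} H"
    by (auto elim!: eventually_mono)
  from Lim_transform_eventually[OF Levy_inversion_density[OF pd \<open>a \<le> b\<close>, folded L_def] this]
  have "1 / (2 * pi) * integral {-R..R} H = measure (density lborel (\<lambda>t. ennreal (f t))) {a<..b}"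
    by (simp add: LIMSEQ_const_iff)
  then show ?thesis
    unfolding H_def by simp
qed

lemma continuous_eq_of_integrals_eq:
  fixes g h :: "real \<Rightarrow> 'a::banach"
  assumes "continuous_on UNIV g" "continuous_on UNIV h"
    and integrals_eq: "\<And>a b. a \<le> b \<Longrightarrow> integral {a..b} g = integral {a..b} h"
  shows "g = h"
proof (rule ext)
  fix x :: real
  have x: "x \<in> {x - 1..x + 1}"
    by simp
  have g_deriv: "((\<lambda>u. integral {x - 1..u} g) has_vector_derivative g x) (at x within {x - 1..x + 1})"
    using assms(1) x by (intro integral_has_vector_derivative) (auto intro: continuous_on_subset)
  have "((\<lambda>u. integral {x - 1..u} h) has_vector_derivative g x) (at x within {x - 1..x + 1})"
    by (rule has_vector_derivative_transform[OF x _ g_deriv]) (simp add: integrals_eq)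
  moreover have "((\<lambda>u. integral {x - 1..u} h) has_vector_derivative h x) (at x within {x - 1..x + 1})"
    using assms(2) x by (intro integral_has_vector_derivative) (auto intro: continuous_on_subset)
  moreover have "at x within {x - 1..x + 1} \<noteq> bot"
    by (simp add: at_within_Icc_at)
  ultimately show "g x = h x"
    using vector_derivative_unique_within by blast
qed

lemma band_limited_density_inversion:
  assumes pd: "prob_density f" and "continuous_on UNIV f"
    and vanish: "\<And>w. R \<le> \<bar>w\<bar> \<Longrightarrow> char_fun f w = 0"
  shows "complex_of_real (f x) = integral {-R..R} (\<lambda>w. char_fun f w * cis (- (w * x))) / (2 * pi)"
proof -
  have "(\<lambda>t. complex_of_real (f t)) = (\<lambda>t. integral {-R..R} (\<lambda>w. char_fun f w * cis (- (w * t))) / (2 * pi))"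
  proof (rule continuous_eq_of_integrals_eq)
    have char_cont: "continuous_on UNIV (char_fun f)"
      by (rule continuous_on_char_fun[OF pd])
    show "continuous_on UNIV (\<lambda>t. complex_of_real (f t))"
      by (intro continuous_intros assms(2))
    have "continuous_on UNIV (\<lambda>t. integral (cbox (-R) R) (\<lambda>w. char_fun f w * cis (- (w * t))))"
      by (rule integral_continuous_on_param)
         (auto simp: case_prod_unfold intro!: continuous_intros continuous_on_compose2[OF char_cont])
    then show "continuous_on UNIV (\<lambda>t. integral {-R..R} (\<lambda>w. char_fun f w * cis (- (w * t))) / (2 * pi))"
      by (intro continuous_intros) (simp_all add: pi_neq_zero)
    fix a b :: real
    assume "a \<le> b"
    have "continuous_on (cbox (a, -R) (b, R)) (\<lambda>(t, w). char_fun f w * cis (- (w * t)))"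
      by (auto simp: case_prod_unfold intro!: continuous_intros continuous_on_compose2[OF char_cont])
    from integral_swap_continuous[OF this]
    have "integral {a..b} (\<lambda>t. integral {-R..R} (\<lambda>w. char_fun f w * cis (- (w * t))) / (2 * pi))
        = integral {-R..R} (\<lambda>w. char_fun f w * integral {a..b} (\<lambda>s. cis (- (w * s)))) / (2 * pi)"
      by simp
    also have "\<dots> = measure (density lborel (\<lambda>t. ennreal (f t))) {a<..b}"
      by (rule band_limited_measure_Ioc[OF pd vanish \<open>a \<le> b\<close>])
    also have "\<dots> = complex_of_real (integral {a..b} f)"
      using pd assms(2) by (subst measure_density_Ioc) (auto simp: prob_density_def intro: continuous_on_subset)
    also have "\<dots> = integral {a..b} (\<lambda>t. complex_of_real (f t))"
      using assms(2) by (intro integral_unique[symmetric] has_integral_of_real integrable_integral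
          integrable_continuous_interval) (auto intro: continuous_on_subset)
    finally show "integral {a..b} (\<lambda>t. complex_of_real (f t))
        = integral {a..b} (\<lambda>t. integral {-R..R} (\<lambda>w. char_fun f w * cis (- (w * t))) / (2 * pi))"
      by (rule sym)
  qed
  then show ?thesis
    by (rule fun_cong)
qed

section \<open>Restriction to the integers\<close>

lemma cesaro_mean_sym_partial_sum_of_real:
  "cesaro_mean (sym_partial_sum (\<lambda>k. of_real (a k) :: 'a::real_normed_algebra_1))
     = (\<lambda>N. of_real (cesaro_mean (sym_partial_sum a) N))"
  by (simp add: fun_eq_iff cesaro_mean_def sym_partial_sum_def scaleR_conv_of_real)

lemma fourier_coeff_char_fun:
  assumes "prob_density f" "continuous_on UNIV f" "\<And>w. pi \<le> \<bar>w\<bar> \<Longrightarrow> char_fun f w = 0"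
  shows "fourier_coeff (char_fun f) = (\<lambda>k. complex_of_real (f (of_int k)))"
proof
  fix k :: int
  show "fourier_coeff (char_fun f) k = complex_of_real (f (of_int k))"
    using band_limited_density_inversion[OF assms, where x = "of_int k"] by (simp add: fourier_coeff_def)
qed

lemma has_sum_lattice_values:
  assumes pd: "prob_density f" and "continuous_on UNIV f"
    and vanish: "\<And>w. pi \<le> \<bar>w\<bar> \<Longrightarrow> char_fun f w = 0"
  shows "((\<lambda>k::int. f (of_int k)) has_sum 1) UNIV"
proof -
  have "continuous_on {-pi..pi} (char_fun f)"
    using continuous_on_char_fun[OF pd] by (rule continuous_on_subset) simp
  from cesaro_mean_fourier_series_at_0[OF this]
  have "(\<lambda>N. complex_of_real (cesaro_mean (sym_partial_sum (\<lambda>k. f (of_int k))) N)) \<longlonglongrightarrow> complex_of_real 1"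
    by (simp only: fourier_coeff_char_fun[OF assms] char_fun_zero[OF pd]
        cesaro_mean_sym_partial_sum_of_real of_real_1)
  then have "cesaro_mean (sym_partial_sum (\<lambda>k. f (of_int k))) \<longlonglongrightarrow> 1"
    by (rule tendsto_of_real_iff[THEN iffD1])
  then show ?thesis
    using pd by (intro nonneg_has_sum_of_cesaro_mean_tendsto) (auto simp: prob_density_def)
qed

lemma char_fun_int_lattice_values_eq_0:
  assumes pd: "prob_density f" and cont_f: "continuous_on UNIV f"
    and supp: "\<And>w. char_fun f w \<noteq> 0 \<Longrightarrow> \<bar>w\<bar> < \<Delta>" and "0 < \<Delta>" "\<Delta> < \<bar>\<omega>\<bar>" "\<bar>\<omega>\<bar> \<le> pi"
  shows "char_fun_int (\<lambda>k. f (of_int k)) \<omega> = 0"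
proof -
  have vanish: "char_fun f w = 0" if "pi \<le> \<bar>w\<bar>" for w
    using supp[of w] that assms(5,6) by fastforce
  define b where "b = (\<lambda>k::int. complex_of_real (f (of_int k)) * cis (\<omega> * of_int k))"
  have "(\<lambda>k::int. f (of_int k)) summable_on UNIV"
    using has_sum_lattice_values[OF pd cont_f vanish] by (auto simp: summable_on_def)
  then have "(\<lambda>k. norm (b k)) summable_on UNIV"
    using pd by (simp add: b_def norm_mult prob_density_def)
  then have "b summable_on UNIV"
    by (rule abs_summable_summable)
  moreover have "cesaro_mean (sym_partial_sum b) \<longlonglongrightarrow> 0"
  proof -
    have "continuous_on {-pi..pi} (char_fun f)"
      using continuous_on_char_fun[OF pd] by (rule continuous_on_subset) simp
    moreover have "\<bar>\<omega>\<bar> - \<Delta> \<le> \<bar>\<omega> - w\<bar> \<and> \<bar>\<omega> - w\<bar> \<le> 2 * pi - (\<bar>\<omega>\<bar> - \<Delta>)"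
      if "char_fun f w \<noteq> 0" for w
      using supp[OF that] \<open>\<bar>\<omega>\<bar> \<le> pi\<close> by linarith
    ultimately have "cesaro_mean (sym_partial_sum (\<lambda>k. fourier_coeff (char_fun f) k * cis (\<omega> * of_int k)))
        \<longlonglongrightarrow> 0"
      using assms(4-6) by (intro cesaro_mean_fourier_series_tendsto_0[where \<delta> = "\<bar>\<omega>\<bar> - \<Delta>"]) auto
    then show ?thesis
      by (simp add: b_def fourier_coeff_char_fun[OF pd cont_f vanish])
  qed
  ultimately have "infsum b UNIV = 0"
    by (rule infsum_eq_cesaro_limit)
  then show ?thesis
    by (simp add: char_fun_int_def b_def)
qed

theorem lemma4:
  fixes f :: "real \<Rightarrow> real" and \<Delta> :: real
  assumes "0 < \<Delta>" and "\<Delta> \<le> pi"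
    and "prob_density f"
    and "continuous_on UNIV f"
    and "closure {\<omega>. char_fun f \<omega> \<noteq> 0} \<subseteq> {-\<Delta><..<\<Delta>}"
  shows "(\<forall>k::int. 0 \<le> f (of_int k))
       \<and> ((\<lambda>k::int. f (of_int k)) has_sum 1) UNIV
       \<and> (\<forall>\<omega>. \<Delta> < \<bar>\<omega>\<bar> \<and> \<bar>\<omega>\<bar> \<le> pi \<longrightarrow> char_fun_int (\<lambda>k. f (of_int k)) \<omega> = 0)"
proof -
  have supp: "\<bar>w\<bar> < \<Delta>" if "char_fun f w \<noteq> 0" for w
  proof -
    have "w \<in> closure {\<omega>. char_fun f \<omega> \<noteq> 0}"
      using that by (intro closure_subset[THEN subsetD]) simp
    then show ?thesis
      using assms(5) by (auto simp: abs_less_iff)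
  qed
  have "char_fun f w = 0" if "pi \<le> \<bar>w\<bar>" for w
    using supp[of w] that \<open>\<Delta> \<le> pi\<close> by fastforce
  then have "((\<lambda>k::int. f (of_int k)) has_sum 1) UNIV"
    by (rule has_sum_lattice_values[OF assms(3,4)])
  moreover have "char_fun_int (\<lambda>k. f (of_int k)) \<omega> = 0" if "\<Delta> < \<bar>\<omega>\<bar>" "\<bar>\<omega>\<bar> \<le> pi" for \<omega>
    using assms(3,4) supp \<open>0 < \<Delta>\<close> that by (rule char_fun_int_lattice_values_eq_0)
  moreover have "0 \<le> f (of_int k)" for k
    using assms(3) by (simp add: prob_density_def)
  ultimately show ?thesis
    by blast
qed

end
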